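(* Let $q=p^n$ be odd, let $k\neq 0$ be a positive integer, and let $f(x)=ax^{p^k+1}+dx^{p^k}+bx+c\in\mathbb{F}_q[x]$. If $f(x)=g(x)^2$ for some polynomial $g$, then either $d^{p^k}a=ba^{p^k}$ and $d^{p^k+1}a=ca^{p^k+1}$, or $a=b=d=0$. *)

theory Defs
  imports "HOL-Computational_Algebra.Polynomial"
begin

end

theory Submission
  imports Defs
begin

(* Write f = a x^(q+1) + d x^q + b x + c with q = p^k.  As p = 0 in the field, f' = a x^q + b,
   and a f - (a x + d) f' is the constant a c - d b.  If f = g^2, then g divides both f and f',
   hence this constant; since g is not constant, a c = d b.  Then a f = (a x + d) f', so -d/a is a
   root of f, hence of g, hence of f' = 2 g g', and f'(-d/a) = 0 gives d^q a = b a^q. *)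

lemma of_nat_card_UNIV_eq_0: "of_nat (card (UNIV :: 'a :: {finite, ring_1} set)) = (0 :: 'a)"
proof -
  have "(\<Sum>x\<in>UNIV. x + 1) = (\<Sum>x\<in>UNIV. x :: 'a)"
    by (rule sum.reindex_bij_witness[of _ "\<lambda>x. x - 1" "\<lambda>x. x + 1"]) auto
  then show ?thesis
    by (simp add: sum.distrib)
qed

lemma CHAR_eq_prime_if_card_eq_power:
  assumes "prime p" and "card (UNIV :: 'a :: {finite, field} set) = p ^ n"
  shows "CHAR('a) = p"
proof -
  have "prime CHAR('a)"
    by (intro prime_CHAR_semidom finite_imp_CHAR_pos) simp
  moreover have "CHAR('a) dvd p ^ n"
    using of_nat_card_UNIV_eq_0[where 'a = 'a] assms(2) by (metis of_nat_eq_0_iff_char_dvd)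
  ultimately show ?thesis
    using assms(1) by (metis prime_dvd_power primes_dvd_imp_eq)
qed

lemma dvd_pderiv_square: "p dvd pderiv (p ^ 2)"
  by (simp add: power2_eq_square pderiv_mult)

lemma dvd_const_poly_imp_degree_0:
  fixes p :: "'a :: field poly"
  assumes "p dvd [:c:]" and "c \<noteq> 0"
  shows "degree p = 0"
  using assms by (metis dvd_unit_imp_unit is_unit_iff_degree is_unit_triv not_is_unit_0)

context
  fixes a d b c :: "'a :: field" and q :: nat
  assumes q_eq_0: "of_nat q = (0 :: 'a)" and q_pos: "q > 0"
begin

lemma pderiv_xq1_poly:
  "pderiv (monom a (q + 1) + monom d q + monom b 1 + [:c:]) = monom a q + [:b:]"
  using q_eq_0 q_pos by (simp add: pderiv_add pderiv_monom pderiv_pCons monom_0)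

lemma xq1_poly_eq_pderiv_plus_const:
  "smult a (monom a (q + 1) + monom d q + monom b 1 + [:c:])
     = [:d, a:] * pderiv (monom a (q + 1) + monom d q + monom b 1 + [:c:]) + [:a * c - d * b:]"
proof -
  have "[:d, a:] * (monom a q + [:b:])
          = smult d (monom a q + [:b:]) + pCons 0 (smult a (monom a q + [:b:]))"
    by (simp add: mult_pCons_left)
  also have "\<dots> = monom (d * a) q + [:d * b:] + monom (a * a) (q + 1) + monom (a * b) 1"
    by (simp add: smult_add_right smult_monom monom_Suc monom_0)
  finally show ?thesis
    unfolding pderiv_xq1_poly by (simp add: smult_add_right smult_monom monom_0 algebra_simps)
qed

lemma xq1_poly_square_imp_ac_eq_db:
  assumes "a \<noteq> 0"
    and f_eq: "monom a (q + 1) + monom d q + monom b 1 + [:c:] = g ^ 2" (is "?f = _")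
  shows "a * c = d * b"
proof (rule ccontr)
  assume "a * c \<noteq> d * b"
  have "g dvd smult a ?f - [:d, a:] * pderiv ?f"
    unfolding f_eq
    by (intro dvd_diff dvd_smult dvd_mult dvd_pderiv_square) (simp add: power2_eq_square)
  then have "g dvd [:a * c - d * b:]"
    by (metis xq1_poly_eq_pderiv_plus_const add_diff_cancel_left')
  with \<open>a * c \<noteq> d * b\<close> have "degree g = 0"
    by (intro dvd_const_poly_imp_degree_0) auto
  then have "degree ?f = 0"
    unfolding f_eq using degree_power_le[of g 2] by simp
  moreover have "coeff ?f (q + 1) = a"
    using q_pos by (simp add: coeff_monom)
  ultimately show False
    using \<open>a \<noteq> 0\<close> le_degree[of ?f "q + 1"] by simp
qed

lemma xq1_poly_square_imp_dq_eq_baq: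
  assumes "odd q" and "a \<noteq> 0"
    and f_eq: "monom a (q + 1) + monom d q + monom b 1 + [:c:] = g ^ 2" (is "?f = _")
  shows "d ^ q * a = b * a ^ q"
proof -
  define x where "x = - d / a"
  have "smult a ?f = [:d, a:] * pderiv ?f"
    using xq1_poly_eq_pderiv_plus_const xq1_poly_square_imp_ac_eq_db[OF assms(2,3)] by simp
  then have "a * poly ?f x = poly [:d, a:] x * poly (pderiv ?f) x"
    by (metis poly_mult poly_smult)
  also have "poly [:d, a:] x = 0"
    using \<open>a \<noteq> 0\<close> by (simp add: x_def)
  finally have "poly g x = 0"
    using \<open>a \<noteq> 0\<close> unfolding f_eq by simp
  moreover obtain h where "pderiv ?f = g * h"
    unfolding f_eq using dvd_pderiv_square by (rule dvdE)
  ultimately have "poly (pderiv ?f) x = 0"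
    by simp
  then have "b = a * (d / a) ^ q"
    using \<open>odd q\<close> unfolding pderiv_xq1_poly
    by (simp add: poly_monom x_def power_minus_odd)
  then show ?thesis
    using \<open>a \<noteq> 0\<close> by (simp add: power_divide)
qed

end

theorem lemma1:
  fixes a b c d :: "'a :: {finite, field}" and p n k :: nat and g :: "'a poly"
  assumes "prime p" and "card (UNIV :: 'a set) = p ^ n" and "odd (card (UNIV :: 'a set))" and "k > 0"
    and "monom a (p ^ k + 1) + monom d (p ^ k) + monom b 1 + [:c:] = g ^ 2"
  shows "(d ^ (p ^ k) * a = b * a ^ (p ^ k) \<and> d ^ (p ^ k + 1) * a = c * a ^ (p ^ k + 1))
         \<or> (a = 0 \<and> b = 0 \<and> d = 0)"
proof (cases "a = 0")
  case True
  then show ?thesis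
    using prime_gt_0_nat[OF assms(1)] by simp
next
  case False
  have char: "CHAR('a) = p"
    using CHAR_eq_prime_if_card_eq_power assms(1,2) by blast
  then have q_eq_0: "of_nat (p ^ k) = (0 :: 'a)"
    using \<open>k > 0\<close> by (simp add: of_nat_eq_0_iff_char_dvd)
  have "p dvd card (UNIV :: 'a set)"
    using of_nat_card_UNIV_eq_0[where 'a = 'a] char by (simp add: of_nat_eq_0_iff_char_dvd)
  then have q_odd: "odd (p ^ k)"
    using assms(3) by (auto dest: dvd_trans)
  have ac_eq_db: "a * c = d * b"
    using xq1_poly_square_imp_ac_eq_db[OF q_eq_0 odd_pos[OF q_odd] False assms(5)] .
  have dq: "d ^ p ^ k * a = b * a ^ p ^ k"
    using xq1_poly_square_imp_dq_eq_baq[OF q_eq_0 odd_pos[OF q_odd] q_odd False assms(5)] .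
  have "d ^ (p ^ k + 1) * a = d * b * a ^ p ^ k"
    using dq by simp
  also have "\<dots> = a * c * a ^ p ^ k"
    by (simp add: ac_eq_db)
  also have "\<dots> = c * a ^ (p ^ k + 1)"
    by (simp add: algebra_simps)
  finally show ?thesis
    using dq by blast
qed

end
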